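(* Let $a,c$ be positive integers and $\vec k=(a,1,c)$. Then $\mathrm{depth}(\pi)=\mathrm{bounce}(\pi)$ for every $\pi\in\mathcal D_{\vec k}$, and hence $$\sum_{\pi\in\mathcal D_{\vec k}}q^{\mathrm{area}(\pi)}t^{\mathrm{depth}(\pi)}=\sum_{\pi\in\mathcal D_{\vec k}}q^{\mathrm{area}(\pi)}t^{\mathrm{bounce}(\pi)}.$$
   Context: For $\vec k=(k_1,\dots,k_\ell)$ put $|\vec k|=\sum k_i$, $N=|\vec k|+\ell$. A $\vec k$-Dyck path is a word $\pi=\pi_1\cdots\pi_N$ containing the letters $S^{k_1},\dots,S^{k_\ell}$ exactly once each and in this order, together with $|\vec k|$ letters $W$, such that all starting ranks are nonnegative, where $r_1=0$, $r_{i+1}=r_i+k_j$ if $\pi_i=S^{k_j}$ and $r_{i+1}=r_i-1$ if $\pi_i=W$. $\mathcal D_{\vec k}$ is the set of such paths. $\mathrm{area}(\pi)=\sum_j a_j$ where $a_j$ is the starting rank of $S^{k_j}$. Filling algorithms: in a tableau of $\ell$ top-justified columns, column $i$ having $k_i+1$ cells, place $1$ at the top of column 1; for $i=2,\dots,N$, call an entry active if it is currently the bottom entry of a column $i'$ not yet containing $k_{i'}+1$ entries; if $\pi_i=W$ place $i$ immediately below the smallest active entry (algorithm $\eta$) resp. the largest active entry (algorithm $\eta_*$); otherwise place $i$ at the top of the first empty column. Ranking: for a filled tableau $F$, column 1 gets ranks $0,\dots,k_1$ top to bottom; for $i\ge2$, if the top entry of column $i$ of $F$ is $A+1$ and $A$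 has rank $\alpha$, column $i$ gets ranks $\alpha,\dots,\alpha+k_i$ top to bottom. $\mathrm{bounce}(\pi)$ is the sum of the first-row ranks for $F=\eta(\pi)$, and $\mathrm{depth}(\pi)$ is the sum of the first-row ranks for $F=\eta_*(\pi)$. *)

theory Defs
  imports Main
begin

text \<open>The letter \<open>S j\<close> (j 0-based) stands for the paper's
  letter S^{k_{j+1}}, i.e. the (j+1)-st north-type letter, which raises the rank by k!j;
  \<open>W\<close> lowers the rank by one.\<close>

datatype letter = S nat | W

definition step :: "nat list \<Rightarrow> letter \<Rightarrow> int" where
  "step k x = (case x of S j \<Rightarrow> int (k ! j) | W \<Rightarrow> -1)"

fun ranks_from :: "nat list \<Rightarrow> int \<Rightarrow> letter list \<Rightarrow> int list" where
  "ranks_from k r [] = []"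
| "ranks_from k r (x # xs) = r # ranks_from k (r + step k x) xs"

definition start_ranks :: "nat list \<Rightarrow> letter list \<Rightarrow> int list" where
  "start_ranks k \<pi> = ranks_from k 0 \<pi>"

definition dyck_paths :: "nat list \<Rightarrow> letter list set" where
  "dyck_paths k = {\<pi>. filter (\<lambda>x. x \<noteq> W) \<pi> = map S [0..<length k]
                      \<and> count_list \<pi> W = sum_list k
                      \<and> (\<forall>r \<in> set (start_ranks k \<pi>). 0 \<le> r)}"

definition area :: "nat list \<Rightarrow> letter list \<Rightarrow> nat" where
  "area k \<pi> = (\<Sum>i<length \<pi>. if \<pi> ! i \<noteq> W then nat (start_ranks k \<pi> ! i) else 0)"

text \<open>Tableaux: a list of l columns, each a list of entries from top to bottom.
  The selector \<open>sel\<close> picks, from the set of active entries, the one below which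
  the next entry is put (Min for eta, Max for eta_star).\<close>

definition active_cols :: "nat list \<Rightarrow> nat list list \<Rightarrow> nat set" where
  "active_cols k F = {j. j < length F \<and> F ! j \<noteq> [] \<and> length (F ! j) < k ! j + 1}"

definition fill_step :: "(nat set \<Rightarrow> nat) \<Rightarrow> nat list \<Rightarrow> nat list list \<Rightarrow> nat \<times> letter
    \<Rightarrow> nat list list" where
  "fill_step sel k F p =
     (let i = fst p in
      if snd p = W then
        (let v = sel ((\<lambda>j. last (F ! j)) ` active_cols k F);
             j = (LEAST j. j \<in> active_cols k F \<and> last (F ! j) = v)
         in F[j := F ! j @ [i]])
      else
        (let j = (LEAST j. j < length F \<and> F ! j = []) in F[j := [i]]))"

definition fill :: "(nat set \<Rightarrow> nat) \<Rightarrow> nat list \<Rightarrow> letter list \<Rightarrow> nat list list" where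
  "fill sel k \<pi> =
     foldl (fill_step sel k) ([1] # replicate (length k - 1) [])
           (zip [2..<Suc (length \<pi>)] (tl \<pi>))"

definition eta :: "nat list \<Rightarrow> letter list \<Rightarrow> nat list list" where
  "eta k \<pi> = fill Min k \<pi>"

definition eta_star :: "nat list \<Rightarrow> letter list \<Rightarrow> nat list list" where
  "eta_star k \<pi> = fill Max k \<pi>"

text \<open>Ranking: rs is the list of ranks of the top cells of the columns processed so far;
  an entry A in column j at row r (0-based) has rank rs!j + r.\<close>

definition entry_rank :: "nat list list \<Rightarrow> nat list \<Rightarrow> nat \<Rightarrow> nat" where
  "entry_rank F rs A =
     (let j = (LEAST j. j < length rs \<and> A \<in> set (F ! j));
          r = (LEAST r. r < length (F ! j) \<and> F ! j ! r = A)
      in rs ! j + r)"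

definition top_ranks :: "nat list list \<Rightarrow> nat list" where
  "top_ranks F = foldl (\<lambda>rs i. rs @ [entry_rank F rs (hd (F ! i) - 1)]) [0] [1..<length F]"

definition bounce :: "nat list \<Rightarrow> letter list \<Rightarrow> nat" where
  "bounce k \<pi> = sum_list (top_ranks (eta k \<pi>))"

definition depth :: "nat list \<Rightarrow> letter list \<Rightarrow> nat" where
  "depth k \<pi> = sum_list (top_ranks (eta_star k \<pi>))"

end

theory Submission
  imports Defs
begin

(* A path in D_(a,1,c) is S^a W^x S^1 W^y S^c W^z with x <= a and x + y <= a + 1. Both fillings
   put 1, ..., x+1 into column 1 and x+2 on top of column 2, so the second first-row rank is x,
   and the third one is the rank of the entry x+y+2, which later entries cannot change. The two
   fillings differ only in where the first two letters of the run W^y go: eta sends them to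
   columns 1 and 2, eta_* to columns 2 and 1 (with a single letter, eta may also use column 2
   when column 1 is full). Either way column 2 is then full and the rest of the run extends
   column 1, and in each case x+y+2 gets the same rank: x, x+1 or x+y-1 according as y = 0,
   y <= 2 or y >= 3. *)

declare upt_Suc [simp del]

definition abc_path :: "nat \<Rightarrow> nat \<Rightarrow> nat \<Rightarrow> letter list" where
  "abc_path x y z = S 0 # replicate x W @ S 1 # replicate y W @ S 2 # replicate z W"

lemma ranks_from_replicate_W_append:
  "ranks_from k r (replicate n W @ ys) = map (\<lambda>i. r - int i) [0..<n] @ ranks_from k (r - int n) ys"
proof (induction n arbitrary: r)
  case (Suc n)
  have "map (\<lambda>i. r - int i) [0..<Suc n] = r # map (\<lambda>i. r - 1 - int i) [0..<n]"
    by (simp add: map_upt_Suc)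
  then show ?case
    using Suc[of "r - 1"] by (simp add: step_def algebra_simps)
qed simp

lemma filter_not_W_eq_ConsD:
  assumes "filter (\<lambda>x. x \<noteq> W) \<pi> = s # ss"
  obtains n \<rho> where "\<pi> = replicate n W @ s # \<rho>" and "filter (\<lambda>x. x \<noteq> W) \<rho> = ss"
proof -
  obtain us \<rho> where "\<pi> = us @ s # \<rho>" "\<forall>u\<in>set us. u = W"
    and "filter (\<lambda>x. x \<noteq> W) \<rho> = ss"
    using filter_eq_ConsD[OF assms] by auto
  then show thesis
    using that[of "length us"] by (metis replicate_length_same)
qed

lemma filter_not_W_eq_NilD:
  "filter (\<lambda>x. x \<noteq> W) \<pi> = [] \<Longrightarrow> \<pi> = replicate (length \<pi>) W"
  by (simp add: filter_empty_conv replicate_length_same)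

lemma dyck_paths_a1c_shape:
  assumes "\<pi> \<in> dyck_paths [a, 1, c]"
  obtains x y z where "\<pi> = abc_path x y z" and "x \<le> a" and "x + y \<le> a + 1"
proof -
  have "filter (\<lambda>x. x \<noteq> W) \<pi> = [S 0, S 1, S 2]"
    and nonneg: "\<forall>r\<in>set (start_ranks [a, 1, c] \<pi>). 0 \<le> r"
    using assms by (auto simp: dyck_paths_def eval_nat_numeral upt_Suc)
  then obtain w x y z
    where \<pi>: "\<pi> = replicate w W @ S 0 # replicate x W @ S 1 # replicate y W @ S 2 # replicate z W"
    by (elim filter_not_W_eq_ConsD) (metis filter_not_W_eq_NilD)
  have ranks: "start_ranks [a, 1, c] \<pi> = map (\<lambda>i. - int i) [0..<w] @ - int w #
      map (\<lambda>i. - int w + int a - int i) [0..<x] @ (- int w + int a - int x) #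
      map (\<lambda>i. - int w + int a - int x + 1 - int i) [0..<y] @ (- int w + int a - int x + 1 - int y) #
      ranks_from [a, 1, c] (- int w + int a - int x + 1 - int y + int c) (replicate z W)"
    by (simp add: \<pi> start_ranks_def ranks_from_replicate_W_append step_def)
  have "0 \<le> - int w" "0 \<le> - int w + int a - int x" "0 \<le> - int w + int a - int x + 1 - int y"
    using nonneg unfolding ranks by auto
  then show thesis
    using that \<pi> by (simp add: abc_path_def)
qed

definition W_run :: "nat \<Rightarrow> nat \<Rightarrow> (nat \<times> letter) list" where
  "W_run i n = map (\<lambda>j. (j, W)) [i..<i + n]"

lemma W_run_0 [simp]: "W_run i 0 = []"
  by (simp add: W_run_def)

lemma W_run_Suc: "W_run i (Suc n) = (i, W) # W_run (Suc i) n"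
  by (simp add: W_run_def upt_conv_Cons)

lemma zip_upt_replicate_W: "m + n = N \<Longrightarrow> zip [m..<N] (replicate n W) = W_run m n"
  by (simp add: W_run_def zip_replicate2)

lemma zip_upt_replicate_W_append:
  "m + n + length ys = N \<Longrightarrow> zip [m..<N] (replicate n W @ ys) = W_run m n @ zip [m + n..<N] ys"
proof (induction n arbitrary: m)
  case (Suc n)
  then show ?case
    using Suc.IH[of "Suc m"] by (simp add: W_run_Suc upt_conv_Cons)
qed simp

lemma zip_upt_Cons: "m < N \<Longrightarrow> zip [m..<N] (s # ys) = (m, s) # zip [Suc m..<N] ys"
  by (simp add: upt_conv_Cons)

lemma fill_step_S_eq:
  assumes "j < length F" "F ! j = []" "\<forall>j' < j. F ! j' \<noteq> []"
  shows "fill_step sel k F (i, S m) = F[j := [i]]"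
proof -
  have "(LEAST j. j < length F \<and> F ! j = []) = j"
    by (rule Least_equality) (use assms in \<open>auto simp: not_le[symmetric]\<close>)
  then show ?thesis
    by (simp add: fill_step_def Let_def)
qed

lemma fill_step_W_eq:
  assumes "active_cols k F = J" "j \<in> J" "sel ((\<lambda>j. last (F ! j)) ` J) = last (F ! j)"
    and "inj_on (\<lambda>j. last (F ! j)) J"
  shows "fill_step sel k F (i, W) = F[j := F ! j @ [i]]"
proof -
  have "(LEAST j'. j' \<in> J \<and> last (F ! j') = last (F ! j)) = j"
    by (rule Least_equality) (use assms(2,4) in \<open>auto dest: inj_onD\<close>)
  then show ?thesis
    using assms(1,3) by (simp add: fill_step_def Let_def)
qed

lemma active_cols_three_iff:
  "j \<in> active_cols [k0, k1, k2] [c0, c1, c2] \<longleftrightarrow>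
     (j = 0 \<and> c0 \<noteq> [] \<and> length c0 \<le> k0) \<or> (j = 1 \<and> c1 \<noteq> [] \<and> length c1 \<le> k1)
   \<or> (j = 2 \<and> c2 \<noteq> [] \<and> length c2 \<le> k2)"
  by (auto simp: active_cols_def less_Suc_eq numeral_3_eq_3)

lemma fill_W_run_extends:
  "length (foldl (fill_step sel k) F (W_run i n)) = length F \<and>
   (\<forall>j < length F. \<exists>e.
      foldl (fill_step sel k) F (W_run i n) ! j = F ! j @ e \<and> set e \<subseteq> {i..<i + n})"
proof (induction n arbitrary: F i)
  case (Suc n)
  obtain j0 where step: "fill_step sel k F (i, W) = F[j0 := F ! j0 @ [i]]"
    unfolding fill_step_def Let_def by auto
  define F' where "F' = F[j0 := F ! j0 @ [i]]"
  have "F' ! j = F ! j @ (if j = j0 then [i] else [])" if "j < length F" for j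
    using that by (simp add: F'_def nth_list_update)
  with Suc[of F' "Suc i"] show ?case
    by (simp add: W_run_Suc step F'_def[symmetric]) (fastforce simp: F'_def)
qed simp

lemma fill_W_run_first_column:
  assumes sel: "\<And>v. sel {v} = v"
    and "c0 \<noteq> []" "length c0 + n \<le> a + 1" "c1 = [] \<or> length c1 = 2"
  shows "foldl (fill_step sel [a, 1, c]) [c0, c1, []] (W_run i n) = [c0 @ [i..<i + n], c1, []]"
  using assms(2-)
proof (induction n arbitrary: c0 i)
  case (Suc n)
  have "active_cols [a, 1, c] [c0, c1, []] = {0}"
    using Suc.prems by (auto simp: active_cols_three_iff)
  then have "fill_step sel [a, 1, c] [c0, c1, []] (i, W) = [c0 @ [i], c1, []]"
    using fill_step_W_eq[of "[a, 1, c]" "[c0, c1, []]" "{0}" 0 sel i] sel by simp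
  then show ?case
    using Suc.IH[of "c0 @ [i]" "Suc i"] Suc.prems by (simp add: W_run_Suc upt_conv_Cons)
qed simp

lemma fill_abc_path:
  assumes sel: "\<And>v. sel {v} = v" and "x \<le> a"
  shows "fill sel [a, 1, c] (abc_path x y z) =
    foldl (fill_step sel [a, 1, c])
      (fill_step sel [a, 1, c]
        (foldl (fill_step sel [a, 1, c]) [[1..<x + 2], [x + 2], []] (W_run (x + 3) y))
        (x + y + 3, S 2))
      (W_run (x + y + 4) z)"
proof -
  have zip: "zip [2..<Suc (length (abc_path x y z))] (tl (abc_path x y z)) =
      W_run 2 x @ (x + 2, S 1) # W_run (x + 3) y @ (x + y + 3, S 2) # W_run (x + y + 4) z"
    by (simp add: abc_path_def zip_upt_replicate_W_append zip_upt_replicate_W zip_upt_Cons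
        eval_nat_numeral)
  have "foldl (fill_step sel [a, 1, c]) [[1], [], []] (W_run 2 x) = [[1] @ [2..<2 + x], [], []]"
    by (rule fill_W_run_first_column) (use assms in auto)
  moreover have "[1] @ [2..<2 + x] = [1..<x + 2]"
    by (simp add: upt_conv_Cons numeral_2_eq_2)
  moreover have "fill_step sel [a, 1, c] [[1..<x + 2], [], []] (x + 2, S 1) = [[1..<x + 2], [x + 2], []]"
    using fill_step_S_eq[of 1 "[[1..<x + 2], [], []]"] by simp
  ultimately show ?thesis
    unfolding fill_def zip by simp
qed

lemma entry_rank_eqI:
  assumes "j < length rs" "A \<in> set (F ! j)" "\<forall>j' < j. A \<notin> set (F ! j')"
    and "r < length (F ! j)" "F ! j ! r = A" "\<forall>r' < r. F ! j ! r' \<noteq> A"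
  shows "entry_rank F rs A = rs ! j + r"
proof -
  have "(LEAST j. j < length rs \<and> A \<in> set (F ! j)) = j"
    by (rule Least_equality) (use assms in \<open>auto simp: not_le[symmetric]\<close>)
  moreover have "(LEAST r. r < length (F ! j) \<and> F ! j ! r = A) = r"
    by (rule Least_equality) (use assms in \<open>auto simp: not_le[symmetric]\<close>)
  ultimately show ?thesis
    by (simp add: entry_rank_def Let_def)
qed

lemma entry_rank_first_column:
  assumes "distinct p" "r < length p" "p ! r = A" "rs \<noteq> []"
  shows "entry_rank ((p @ e) # G) rs A = rs ! 0 + r"
  by (rule entry_rank_eqI) (use assms in \<open>auto simp: nth_append nth_eq_iff_index_eq\<close>)

lemma entry_rank_second_column:
  assumes "A \<notin> set c0" "distinct p" "r < length p" "p ! r = A" "2 \<le> length rs"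
  shows "entry_rank (c0 # (p @ e) # G) rs A = rs ! 1 + r"
  by (rule entry_rank_eqI)
    (use assms in \<open>auto simp: nth_append nth_eq_iff_index_eq less_Suc_eq\<close>)

lemma Least_index_append:
  assumes "A \<in> set xs"
  shows "(LEAST r. r < length (xs @ ys) \<and> (xs @ ys) ! r = A) =
    (LEAST r. r < length xs \<and> xs ! r = A)"
proof -
  let ?r = "LEAST r. r < length xs \<and> xs ! r = A"
  have "\<exists>r. r < length xs \<and> xs ! r = A"
    using assms by (simp add: in_set_conv_nth)
  then have r: "?r < length xs" "xs ! ?r = A"
    by (metis (mono_tags, lifting) LeastI)+
  show ?thesis
  proof (rule Least_equality)
    fix r assume "r < length (xs @ ys) \<and> (xs @ ys) ! r = A"
    then show "?r \<le> r"
      using r(1) by (cases "r < length xs") (auto simp: nth_append intro: Least_le)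
  qed (use r in \<open>simp add: nth_append\<close>)
qed

lemma entry_rank_append_columns:
  assumes "length rs \<le> length F" "length F' = length F"
    and "\<forall>j < length rs. \<exists>e. F' ! j = F ! j @ e \<and> A \<notin> set e"
    and "\<exists>j < length rs. A \<in> set (F ! j)"
  shows "entry_rank F' rs A = entry_rank F rs A"
proof -
  have mem: "A \<in> set (F' ! j) \<longleftrightarrow> A \<in> set (F ! j)" if "j < length rs" for j
    using assms(3) that by force
  define j where "j = (LEAST j. j < length rs \<and> A \<in> set (F ! j))"
  have j: "j < length rs" "A \<in> set (F ! j)"
    using LeastI_ex[OF assms(4)] by (simp_all add: j_def)
  have "(LEAST j. j < length rs \<and> A \<in> set (F' ! j)) = j"
    unfolding j_def by (metis mem)
  moreover obtain e where "F' ! j = F ! j @ e"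
    using assms(3) j(1) by blast
  ultimately show ?thesis
    using Least_index_append[OF j(2)] by (simp add: entry_rank_def Let_def j_def)
qed

lemma top_ranks_three:
  "top_ranks [c0, c1, c2] =
     (let r1 = entry_rank [c0, c1, c2] [0] (hd c1 - 1)
      in [0, r1, entry_rank [c0, c1, c2] [0, r1] (hd c2 - 1)])"
  by (simp add: top_ranks_def numeral_3_eq_3 upt_conv_Cons Let_def)

lemma fill_W_run_extends_three:
  obtains e0 e1 e2 where
    "foldl (fill_step sel k) [c0, c1, c2] (W_run i n) = [c0 @ e0, c1 @ e1, c2 @ e2]"
    "set e0 \<subseteq> {i..<i + n}" "set e1 \<subseteq> {i..<i + n}" "set e2 \<subseteq> {i..<i + n}"
proof -
  let ?F = "foldl (fill_step sel k) [c0, c1, c2] (W_run i n)"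
  have len: "length ?F = 3"
    and ext: "\<forall>j < 3. \<exists>e. ?F ! j = [c0, c1, c2] ! j @ e \<and> set e \<subseteq> {i..<i + n}"
    using fill_W_run_extends[of sel k "[c0, c1, c2]" i n] by simp_all
  obtain u v w where F: "?F = [u, v, w]"
    using len by (auto simp: numeral_3_eq_3 length_Suc_conv)
  show thesis
    using ext[rule_format, of 0] ext[rule_format, of 1] ext[rule_format, of 2] that
    by (auto simp: F)
qed

lemma top_rank_sum_fill_abc_path:
  assumes sel: "\<And>v. sel {v} = v" and "x \<le> a"
    and pre: "foldl (fill_step sel [a, 1, c]) [[1..<x + 2], [x + 2], []] (W_run (x + 3) y) = [c0, c1, []]"
    and mem: "x + y + 2 \<in> set c0 \<union> set c1"
  shows "sum_list (top_ranks (fill sel [a, 1, c] (abc_path x y z))) =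
    x + entry_rank [c0, c1, []] [0, x] (x + y + 2)"
proof -
  obtain e0 e1 where c0: "c0 = [1..<x + 2] @ e0" and c1: "c1 = (x + 2) # e1"
    using fill_W_run_extends_three[of sel "[a, 1, c]" "[1..<x + 2]" "[x + 2]" "[]" "x + 3" y]
    by (metis pre append_Cons append_Nil list.inject)
  have "fill_step sel [a, 1, c] [c0, c1, []] (x + y + 3, S 2) = [c0, c1, [x + y + 3]]"
    using fill_step_S_eq[of 2 "[c0, c1, []]"] by (simp add: c0 c1 less_Suc_eq numeral_2_eq_2)
  then obtain d0 d1 d2 where
    F: "fill sel [a, 1, c] (abc_path x y z) = [c0 @ d0, c1 @ d1, [x + y + 3] @ d2]"
    and d: "set d0 \<subseteq> {x + y + 4..<x + y + 4 + z}" "set d1 \<subseteq> {x + y + 4..<x + y + 4 + z}"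
    using fill_W_run_extends_three[of sel "[a, 1, c]" c0 c1 "[x + y + 3]" "x + y + 4" z]
    by (metis fill_abc_path[OF sel assms(2)] pre)
  have "entry_rank [c0 @ d0, c1 @ d1, [x + y + 3] @ d2] [0] (x + 1) = x"
    using entry_rank_first_column[of "[1..<x + 2]" x "x + 1" "[0]" "e0 @ d0"] by (simp add: c0)
  moreover have "entry_rank [c0 @ d0, c1 @ d1, [x + y + 3] @ d2] [0, x] (x + y + 2) =
      entry_rank [c0, c1, []] [0, x] (x + y + 2)"
    by (rule entry_rank_append_columns) (use d mem in \<open>auto simp: less_Suc_eq\<close>)
  ultimately show ?thesis
    unfolding F by (simp add: top_ranks_three c1)
qed

definition third_column_rank :: "nat \<Rightarrow> nat \<Rightarrow> nat" where
  "third_column_rank x y = (if y = 0 then x else if y \<le> 2 then x + 1 else x + y - 1)"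

lemma top_rank_sum_fill_abc_path_0:
  assumes "\<And>v. sel {v} = v" and "x \<le> a"
  shows "sum_list (top_ranks (fill sel [a, 1, c] (abc_path x 0 z))) = x + third_column_rank x 0"
proof -
  have "sum_list (top_ranks (fill sel [a, 1, c] (abc_path x 0 z))) =
      x + entry_rank [[1..<x + 2], [x + 2] @ [], []] [0, x] (x + 0 + 2)"
    by (rule top_rank_sum_fill_abc_path) (use assms in simp_all)
  moreover have "entry_rank [[1..<x + 2], [x + 2] @ [], []] [0, x] (x + 2) = x"
    by (subst entry_rank_second_column[where r = 0]) simp_all
  ultimately show ?thesis
    by (simp add: third_column_rank_def)
qed

lemma fill_Max_W_run:
  assumes "x + y \<le> a"
  shows "foldl (fill_step Max [a, 1, c]) [[1..<x + 2], [x + 2], []] (W_run (x + 3) (Suc y)) =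
    [[1..<x + 2] @ [x + 4..<x + 4 + y], [x + 2, x + 3], []]"
proof -
  have "active_cols [a, 1, c] [[1..<x + 2], [x + 2], []] = (if x < a then {0, 1} else {1})"
    using assms by (auto simp: active_cols_three_iff)
  then have "fill_step Max [a, 1, c] [[1..<x + 2], [x + 2], []] (x + 3, W) =
      [[1..<x + 2], [x + 2, x + 3], []]"
    using fill_step_W_eq[of "[a, 1, c]" "[[1..<x + 2], [x + 2], []]" _ 1 Max "x + 3"]
    by (cases "x < a") simp_all
  moreover have
    "foldl (fill_step Max [a, 1, c]) [[1..<x + 2], [x + 2, x + 3], []] (W_run (x + 4) y) =
      [[1..<x + 2] @ [x + 4..<x + 4 + y], [x + 2, x + 3], []]"
    by (rule fill_W_run_first_column) (use assms in simp_all)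
  ultimately show ?thesis
    by (simp add: W_run_Suc eval_nat_numeral)
qed

lemma top_rank_sum_fill_Max:
  assumes "x \<le> a" "x + y \<le> a + 1"
  shows "sum_list (top_ranks (fill Max [a, 1, c] (abc_path x y z))) = x + third_column_rank x y"
proof (cases y)
  case 0
  then show ?thesis
    using top_rank_sum_fill_abc_path_0[of Max x a] assms(1) by simp
next
  case (Suc y')
  let ?c0 = "[1..<x + 2] @ [x + 4..<x + 4 + y']"
  have "entry_rank [?c0, [x + 2, x + 3], []] [0, x] (x + y + 2) = third_column_rank x y"
  proof (cases y')
    case 0
    then show ?thesis
      using entry_rank_second_column[of "x + 3" ?c0 "[x + 2, x + 3]" 1 "[0, x]" "[]" "[[]]"] Suc
      by (simp add: third_column_rank_def eval_nat_numeral)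
  next
    case (Suc y'')
    then show ?thesis
      using entry_rank_first_column[of ?c0 "x + 1 + y''" "x + y + 2" "[0, x]" "[]"]
        \<open>y = Suc y'\<close>
      by (simp add: third_column_rank_def nth_append)
  qed
  moreover have "sum_list (top_ranks (fill Max [a, 1, c] (abc_path x y z))) =
      x + entry_rank [?c0, [x + 2, x + 3], []] [0, x] (x + y + 2)"
    unfolding Suc
    by (rule top_rank_sum_fill_abc_path[OF _ assms(1) fill_Max_W_run]) (use assms Suc in auto)
  ultimately show ?thesis
    by simp
qed

lemma fill_Min_W_run_1:
  assumes "x \<le> a"
  shows "foldl (fill_step Min [a, 1, c]) [[1..<x + 2], [x + 2], []] (W_run (x + 3) 1) =
    (if x < a then [[1..<x + 2] @ [x + 3], [x + 2], []] else [[1..<x + 2], [x + 2, x + 3], []])"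
proof (cases "x < a")
  case True
  then have "active_cols [a, 1, c] [[1..<x + 2], [x + 2], []] = {0, 1}"
    by (auto simp: active_cols_three_iff)
  then show ?thesis
    using True fill_step_W_eq[of "[a, 1, c]" "[[1..<x + 2], [x + 2], []]" _ 0 Min "x + 3"]
    by (simp add: W_run_Suc)
next
  case False
  then have "active_cols [a, 1, c] [[1..<x + 2], [x + 2], []] = {1}"
    using assms by (auto simp: active_cols_three_iff)
  then show ?thesis
    using False fill_step_W_eq[of "[a, 1, c]" "[[1..<x + 2], [x + 2], []]" _ 1 Min "x + 3"]
    by (simp add: W_run_Suc)
qed

lemma fill_Min_W_run_ge_2:
  assumes "x + y + 1 \<le> a"
  shows "foldl (fill_step Min [a, 1, c]) [[1..<x + 2], [x + 2], []] (W_run (x + 3) (Suc (Suc y))) =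
    [[1..<x + 2] @ (x + 3) # [x + 5..<x + 5 + y], [x + 2, x + 4], []]"
proof -
  have active: "active_cols [a, 1, c] [[1..<x + 2] @ [x + 3], [x + 2], []] =
      (if x + 2 \<le> a then {0, 1} else {1})"
    using assms by (auto simp: active_cols_three_iff)
  have "fill_step Min [a, 1, c] [[1..<x + 2], [x + 2], []] (x + 3, W) =
      [[1..<x + 2] @ [x + 3], [x + 2], []]"
    using fill_Min_W_run_1[of x a c] assms by (simp add: W_run_Suc)
  moreover have "fill_step Min [a, 1, c] [[1..<x + 2] @ [x + 3], [x + 2], []] (x + 4, W) =
      [[1..<x + 2] @ [x + 3], [x + 2, x + 4], []]"
    using active fill_step_W_eq[of "[a, 1, c]" "[[1..<x + 2] @ [x + 3], [x + 2], []]" _ 1 Min "x + 4"]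
    by (cases "x + 2 \<le> a") simp_all
  moreover have
    "foldl (fill_step Min [a, 1, c]) [[1..<x + 2] @ [x + 3], [x + 2, x + 4], []] (W_run (x + 5) y) =
      [([1..<x + 2] @ [x + 3]) @ [x + 5..<x + 5 + y], [x + 2, x + 4], []]"
    by (rule fill_W_run_first_column) (use assms in simp_all)
  ultimately show ?thesis
    by (simp add: W_run_Suc eval_nat_numeral)
qed

lemma top_rank_sum_fill_Min:
  assumes "x \<le> a" "x + y \<le> a + 1"
  shows "sum_list (top_ranks (fill Min [a, 1, c] (abc_path x y z))) = x + third_column_rank x y"
proof -
  consider "y = 0" | "y = 1" | y' where "y = Suc (Suc y')"
    by (metis One_nat_def not0_implies_Suc)
  then show ?thesis
  proof cases
    case 1
    then show ?thesis
      using top_rank_sum_fill_abc_path_0[of Min x a] assms(1) by simp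
  next
    case 2
    show ?thesis
    proof (cases "x < a")
      case True
      have "entry_rank [[1..<x + 2] @ [x + 3], [x + 2], []] [0, x] (x + 3) = x + 1"
        using entry_rank_first_column[of "[1..<x + 2] @ [x + 3]" "x + 1" "x + 3" "[0, x]" "[]"]
        by (simp add: nth_append)
      moreover have "sum_list (top_ranks (fill Min [a, 1, c] (abc_path x 1 z))) =
          x + entry_rank [[1..<x + 2] @ [x + 3], [x + 2], []] [0, x] (x + 1 + 2)"
        by (rule top_rank_sum_fill_abc_path) (use assms True fill_Min_W_run_1[of x a c] in auto)
      ultimately show ?thesis
        using 2 by (simp add: third_column_rank_def eval_nat_numeral)
    next
      case False
      have "entry_rank [[1..<x + 2], [x + 2, x + 3] @ [], []] [0, x] (x + 3) = x + 1"
        by (subst entry_rank_second_column[where r = 1]) simp_all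
      moreover have "sum_list (top_ranks (fill Min [a, 1, c] (abc_path x 1 z))) =
          x + entry_rank [[1..<x + 2], [x + 2, x + 3], []] [0, x] (x + 1 + 2)"
        by (rule top_rank_sum_fill_abc_path) (use assms False fill_Min_W_run_1[of x a c] in auto)
      ultimately show ?thesis
        using 2 by (simp add: third_column_rank_def eval_nat_numeral)
    qed
  next
    case 3
    let ?c0 = "[1..<x + 2] @ (x + 3) # [x + 5..<x + 5 + y']"
    have "entry_rank [?c0, [x + 2, x + 4], []] [0, x] (x + y + 2) = third_column_rank x y"
    proof (cases y')
      case 0
      then show ?thesis
        using entry_rank_second_column[of "x + 4" ?c0 "[x + 2, x + 4]" 1 "[0, x]" "[]" "[[]]"] 3
        by (simp add: third_column_rank_def eval_nat_numeral)
    next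
      case (Suc y'')
      then show ?thesis
        using entry_rank_first_column[of ?c0 "x + 2 + y''" "x + y + 2" "[0, x]" "[]"] 3
        by (simp add: third_column_rank_def nth_append)
    qed
    moreover have "sum_list (top_ranks (fill Min [a, 1, c] (abc_path x y z))) =
        x + entry_rank [?c0, [x + 2, x + 4], []] [0, x] (x + y + 2)"
      unfolding 3
      by (rule top_rank_sum_fill_abc_path[OF _ assms(1) fill_Min_W_run_ge_2]) (use assms 3 in auto)
    ultimately show ?thesis
      by simp
  qed
qed

theorem proposition5p6:
  fixes a c :: nat
  assumes "0 < a" and "0 < c"
  shows "(\<forall>\<pi> \<in> dyck_paths [a, 1, c]. depth [a, 1, c] \<pi> = bounce [a, 1, c] \<pi>)
       \<and> (\<forall>q t :: 'r :: comm_semiring_1.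
            (\<Sum>\<pi> \<in> dyck_paths [a, 1, c]. q ^ area [a, 1, c] \<pi> * t ^ depth [a, 1, c] \<pi>)
          = (\<Sum>\<pi> \<in> dyck_paths [a, 1, c]. q ^ area [a, 1, c] \<pi> * t ^ bounce [a, 1, c] \<pi>))"
proof -
  have "depth [a, 1, c] \<pi> = bounce [a, 1, c] \<pi>" if \<pi>: "\<pi> \<in> dyck_paths [a, 1, c]" for \<pi>
  proof -
    obtain x y z where "\<pi> = abc_path x y z" "x \<le> a" "x + y \<le> a + 1"
      using dyck_paths_a1c_shape[OF \<pi>] .
    then show ?thesis
      unfolding depth_def bounce_def eta_def eta_star_def
      using top_rank_sum_fill_Min[of x a y c z] top_rank_sum_fill_Max[of x a y c z] by simp
  qed
  then show ?thesis
    by (auto intro: sum.cong)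
qed

end
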